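(* Let $S$ be a semigroup and let $a\in S$ be an idempotent such that $aSa\subseteq\operatorname{Reg}(S)$. Let $P=\{x\in Sa: x\,\mathscr L\,ax\}$, and let $\phi:P\to aSa$, $x\mapsto ax$. Then $\phi$ is a surjective homomorphism, and (i) $E(Sa)=E(aSa)\phi^{-1}$; (ii) $\mathbb E(Sa)=\mathbb E(aSa)\phi^{-1}$.
   Context: $Sa=\{xa:x\in S\}$ and $aSa=\{axa:x\in S\}$ (a monoid with identity $a$). $\operatorname{Reg}(S)$ is the set of regular elements of $S$. $\mathscr L$ is Green's $\mathscr L$-relation on $S$. For a semigroup $T$, $E(T)$ is its set of idempotents and $\mathbb E(T)=\langle E(T)\rangle$ is the subsemigroup generated by its idempotents. $\phi^{-1}$ denotes preimage. *)

theory Defs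
  imports Main
begin

text \<open>The semigroup S is the ambient type 'a of class semigroup_mult.\<close>

definition regular_elems :: "'a::semigroup_mult set" where
  "regular_elems = {x. \<exists>y. x * y * x = x}"

text \<open>Green's L-relation: S^1 x = S^1 y.\<close>
definition green_L :: "'a::semigroup_mult \<Rightarrow> 'a \<Rightarrow> bool" where
  "green_L x y \<longleftrightarrow> (x = y \<or> (\<exists>s. x = s * y)) \<and> (y = x \<or> (\<exists>s. y = s * x))"

definition idems :: "'a::semigroup_mult set \<Rightarrow> 'a set" where
  "idems T = {e \<in> T. e * e = e}"

inductive_set sgp_gen :: "'a::semigroup_mult set \<Rightarrow> 'a set" for X where
  base: "x \<in> X \<Longrightarrow> x \<in> sgp_gen X"
| mult: "x \<in> sgp_gen X \<Longrightarrow> y \<in> sgp_gen X \<Longrightarrow> x * y \<in> sgp_gen X"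

definition idem_gen :: "'a::semigroup_mult set \<Rightarrow> 'a set" where
  "idem_gen T = sgp_gen (idems T)"

definition left_ideal_at :: "'a::semigroup_mult \<Rightarrow> 'a set" where
  "left_ideal_at a = {x * a | x. True}"

definition local_monoid :: "'a::semigroup_mult \<Rightarrow> 'a set" where
  "local_monoid a = {a * x * a | x. True}"

end

theory Submission
  imports Defs
begin

text \<open>For \<open>x \<in> P\<close> the relation \<open>x \<L> ax\<close> means that \<open>x\<close> is a left multiple of \<open>ax\<close> (or equal
  to it), so every right identity of \<open>ax\<close> is one of \<open>x\<close>. Hence an idempotent \<open>ax\<close> forces \<open>x\<close> to
  be idempotent, which gives (i). For (ii), the image of a product of idempotents of \<open>Sa\<close>
  is a product of idempotents of \<open>aSa\<close>; conversely, if \<open>ax\<close> is a product of idempotents of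
  \<open>aSa \<subseteq> Sa\<close> and \<open>ax y ax = ax\<close> by regularity, then \<open>x = (xya)(ax)\<close> with \<open>xya\<close> an
  idempotent of \<open>Sa\<close>.\<close>

definition L_domain :: "'a::semigroup_mult \<Rightarrow> 'a set" where
  "L_domain a = {x \<in> left_ideal_at a. green_L x (a * x)}"

lemma left_ideal_at_iff:
  fixes a :: "'a::semigroup_mult"
  assumes "a * a = a"
  shows "x \<in> left_ideal_at a \<longleftrightarrow> x * a = x"
proof
  assume "x \<in> left_ideal_at a"
  then obtain s where "x = s * a" by (auto simp: left_ideal_at_def)
  then show "x * a = x" using assms by (simp add: mult.assoc)
qed (auto simp: left_ideal_at_def intro: sym)

lemma local_monoid_iff:
  fixes a :: "'a::semigroup_mult"
  assumes "a * a = a"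
  shows "x \<in> local_monoid a \<longleftrightarrow> x * a = x \<and> a * x = x"
proof
  assume "x \<in> local_monoid a"
  then obtain s where "x = a * s * a" by (auto simp: local_monoid_def)
  then show "x * a = x \<and> a * x = x" using assms by (metis mult.assoc)
next
  assume "x * a = x \<and> a * x = x"
  then have "x = a * x * a" by (simp add: mult.assoc)
  then show "x \<in> local_monoid a" unfolding local_monoid_def by blast
qed

lemma green_L_left_mult_iff:
  "green_L x (a * x) \<longleftrightarrow> x = a * x \<or> (\<exists>s. x = s * (a * x))"
  unfolding green_L_def by blast

lemma green_L_left_mult_mult_right:
  assumes "green_L x (a * x)"
  shows "green_L (x * y) (a * (x * y))"
  using assms unfolding green_L_left_mult_iff by (metis mult.assoc)

lemma green_L_left_mult_right_unit:
  assumes "green_L x (a * x)" and "a * x * u = a * x"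
  shows "x * u = x"
  using assms unfolding green_L_left_mult_iff by (metis mult.assoc)

lemma mem_L_domain_iff:
  fixes a :: "'a::semigroup_mult"
  assumes "a * a = a"
  shows "x \<in> L_domain a \<longleftrightarrow> x * a = x \<and> green_L x (a * x)"
  by (simp add: L_domain_def left_ideal_at_iff[OF assms])

lemma L_domain_mult_closed:
  fixes a :: "'a::semigroup_mult"
  assumes "a * a = a" and "x \<in> L_domain a" and "y \<in> L_domain a"
  shows "x * y \<in> L_domain a"
  using assms green_L_left_mult_mult_right unfolding mem_L_domain_iff[OF assms(1)]
  by (metis mult.assoc)

lemma left_mult_hom_on_L_domain:
  fixes a :: "'a::semigroup_mult"
  assumes "a * a = a" and "x \<in> L_domain a"
  shows "a * (x * y) = (a * x) * (a * y)"
  using assms unfolding mem_L_domain_iff[OF assms(1)] by (metis mult.assoc)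

lemma left_mult_image_L_domain:
  fixes a :: "'a::semigroup_mult"
  assumes "a * a = a"
  shows "(\<lambda>x. a * x) ` L_domain a = local_monoid a"
proof
  show "(\<lambda>x. a * x) ` L_domain a \<subseteq> local_monoid a"
    using assms by (auto simp: mem_L_domain_iff local_monoid_iff) (metis mult.assoc)+
  show "local_monoid a \<subseteq> (\<lambda>x. a * x) ` L_domain a"
  proof
    fix b assume "b \<in> local_monoid a"
    then have "b * a = b" "a * b = b" using local_monoid_iff[OF assms] by auto
    then have "b \<in> L_domain a" using assms by (simp add: mem_L_domain_iff green_L_def)
    with \<open>a * b = b\<close> show "b \<in> (\<lambda>x. a * x) ` L_domain a" by (metis image_eqI)
  qed
qed

lemma idems_local_monoid_subset:
  fixes a :: "'a::semigroup_mult"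
  assumes "a * a = a"
  shows "idems (local_monoid a) \<subseteq> idems (left_ideal_at a)"
  by (auto simp: idems_def local_monoid_iff[OF assms] left_ideal_at_iff[OF assms])

lemma idems_left_ideal_at_eq:
  fixes a :: "'a::semigroup_mult"
  assumes "a * a = a"
  shows "idems (left_ideal_at a) = {x \<in> L_domain a. a * x \<in> idems (local_monoid a)}"
proof
  show "idems (left_ideal_at a) \<subseteq> {x \<in> L_domain a. a * x \<in> idems (local_monoid a)}"
  proof
    fix e assume "e \<in> idems (left_ideal_at a)"
    then have e: "e * a = e" "e * e = e" by (auto simp: idems_def left_ideal_at_iff[OF assms])
    then have "green_L e (a * e)" unfolding green_L_left_mult_iff by (metis mult.assoc)
    moreover have "a * e * a = a * e" "a * (a * e) = a * e" "a * e * (a * e) = a * e"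
      using e assms by (metis mult.assoc)+
    ultimately show "e \<in> {x \<in> L_domain a. a * x \<in> idems (local_monoid a)}"
      using e by (auto simp: idems_def local_monoid_iff[OF assms] mem_L_domain_iff[OF assms])
  qed
  show "{x \<in> L_domain a. a * x \<in> idems (local_monoid a)} \<subseteq> idems (left_ideal_at a)"
  proof
    fix x assume "x \<in> {x \<in> L_domain a. a * x \<in> idems (local_monoid a)}"
    then have xa: "x * a = x" and L: "green_L x (a * x)" and "a * x * (a * x) = a * x"
      by (auto simp: idems_def mem_L_domain_iff[OF assms])
    then have "x * (a * x) = x" by (intro green_L_left_mult_right_unit[OF L])
    with xa have "x * x = x" by (metis mult.assoc)
    with xa show "x \<in> idems (left_ideal_at a)" by (simp add: idems_def left_ideal_at_iff[OF assms])
  qed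
qed

lemma idempotent_factor_through_image:
  fixes a :: "'a::semigroup_mult"
  assumes "a * a = a" and "x * a = x" and "green_L x (a * x)" and "a * x * y * (a * x) = a * x"
  shows "x * y * a \<in> idems (left_ideal_at a)" and "x = (x * y * a) * (a * x)"
proof -
  have xyax: "x * (y * (a * x)) = x"
    using assms(4) by (intro green_L_left_mult_right_unit[OF assms(3)]) (simp add: mult.assoc)
  then have "(x * y * a) * (x * y * a) = x * y * a" by (metis mult.assoc)
  then show "x * y * a \<in> idems (left_ideal_at a)"
    using assms(1) by (simp add: idems_def left_ideal_at_iff mult.assoc)
  show "x = (x * y * a) * (a * x)" using xyax assms(1) by (metis mult.assoc)
qed

lemma sgp_gen_mono: "x \<in> sgp_gen X \<Longrightarrow> X \<subseteq> Y \<Longrightarrow> x \<in> sgp_gen Y"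
  by (induction rule: sgp_gen.induct) (auto intro: sgp_gen.intros)

lemma sgp_gen_hom_image:
  assumes "z \<in> sgp_gen X" and "X \<subseteq> P" and "f ` X \<subseteq> Y"
    and "\<And>x y. x \<in> P \<Longrightarrow> y \<in> P \<Longrightarrow> x * y \<in> P"
    and "\<And>x y. x \<in> P \<Longrightarrow> y \<in> P \<Longrightarrow> f (x * y) = f x * f y"
  shows "z \<in> P \<and> f z \<in> sgp_gen Y"
  using assms(1) by induction (use assms(2-) in \<open>auto intro: sgp_gen.intros\<close>)

lemma idem_gen_left_ideal_at_eq:
  fixes a :: "'a::semigroup_mult"
  assumes "a * a = a" and "local_monoid a \<subseteq> regular_elems"
  shows "idem_gen (left_ideal_at a) = {x \<in> L_domain a. a * x \<in> idem_gen (local_monoid a)}"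
proof
  show "idem_gen (left_ideal_at a) \<subseteq> {x \<in> L_domain a. a * x \<in> idem_gen (local_monoid a)}"
    using sgp_gen_hom_image[where f = "\<lambda>x. a * x" and P = "L_domain a"]
      idems_left_ideal_at_eq[OF assms(1)] L_domain_mult_closed[OF assms(1)]
      left_mult_hom_on_L_domain[OF assms(1)]
    by (auto simp: idem_gen_def)
  show "{x \<in> L_domain a. a * x \<in> idem_gen (local_monoid a)} \<subseteq> idem_gen (left_ideal_at a)"
  proof
    fix x assume "x \<in> {x \<in> L_domain a. a * x \<in> idem_gen (local_monoid a)}"
    then have xa: "x * a = x" and L: "green_L x (a * x)"
      and gen: "a * x \<in> sgp_gen (idems (left_ideal_at a))"
      using sgp_gen_mono idems_local_monoid_subset[OF assms(1)]
      by (auto simp: idem_gen_def mem_L_domain_iff[OF assms(1)])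
    have "a * x \<in> local_monoid a"
      using xa assms(1) by (simp add: local_monoid_iff) (metis mult.assoc)
    then obtain y where "a * x * y * (a * x) = a * x"
      using assms(2) by (auto simp: regular_elems_def)
    note factor = idempotent_factor_through_image[OF assms(1) xa L this]
    have "(x * y * a) * (a * x) \<in> sgp_gen (idems (left_ideal_at a))"
      using factor(1) gen by (blast intro: sgp_gen.intros)
    with factor(2) show "x \<in> idem_gen (left_ideal_at a)" by (simp add: idem_gen_def)
  qed
qed

theorem theorem3p13:
  fixes a :: "'a::semigroup_mult"
  assumes "a * a = a"
    and "local_monoid a \<subseteq> regular_elems"
  defines "P \<equiv> {x \<in> left_ideal_at a. green_L x (a * x)}"
  shows "(\<forall>x\<in>P. \<forall>y\<in>P. x * y \<in> P)
    \<and> (\<forall>x\<in>P. \<forall>y\<in>P. a * (x * y) = (a * x) * (a * y))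
    \<and> (\<lambda>x. a * x) ` P = local_monoid a
    \<and> idems (left_ideal_at a) = {x \<in> P. a * x \<in> idems (local_monoid a)}
    \<and> idem_gen (left_ideal_at a) = {x \<in> P. a * x \<in> idem_gen (local_monoid a)}"
proof -
  have "P = L_domain a" by (simp add: P_def L_domain_def)
  then show ?thesis
    using L_domain_mult_closed[OF assms(1)] left_mult_hom_on_L_domain[OF assms(1)]
      left_mult_image_L_domain[OF assms(1)] idems_left_ideal_at_eq[OF assms(1)]
      idem_gen_left_ideal_at_eq[OF assms(1,2)]
    by blast
qed

end
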